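(* Let $Q$ be a quantale, $M,N,P$ left $Q$-modules and $f:P\to M$, $g:P\to N$ injective $Q$-module homomorphisms. Let $\vartheta$ be the $Q$-module congruence on $M\times N$ generated by $\{((f(w),\bot_N),(\bot_M,g(w)))\mid w\in P\}$. Then for all $(u,v)\in M\times N$, $(u,v)$ is $\vartheta$-saturated if and only if $\{w\in P\mid f(w)\le u\}=\{w\in P\mid g(w)\le v\}$.
   Context: A quantale is a complete lattice with a monoid product distributing over arbitrary joins; a left $Q$-module is a complete lattice with an associative unital action of $Q$ distributing over joins in each argument; homomorphisms preserve arbitrary joins and the action. $M\times N$ is the $Q$-module with componentwise order and action. For $R\subseteq K^2$ ($K$ a $Q$-module), $s\in K$ is $R$-saturated if for all $(x,y)\in R$ and all $a\in Q$: $ax\le s$ iff $ay\le s$. *)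

theory Defs
  imports Main "HOL-Library.Product_Order"
begin

class quantale = complete_lattice + monoid_mult +
  assumes mult_Sup_distl: "a * Sup A = Sup ((\<lambda>b. a * b) ` A)"
      and mult_Sup_distr: "Sup A * a = Sup ((\<lambda>b. b * a) ` A)"

definition qmodule :: "('q::quantale \<Rightarrow> 'm::complete_lattice \<Rightarrow> 'm) \<Rightarrow> bool" where
  "qmodule act \<longleftrightarrow>
     (\<forall>a b x. act a (act b x) = act (a * b) x) \<and>
     (\<forall>x. act 1 x = x) \<and>
     (\<forall>A x. act (Sup A) x = Sup ((\<lambda>a. act a x) ` A)) \<and>
     (\<forall>a X. act a (Sup X) = Sup (act a ` X))"

definition qmodule_hom ::
  "('q::quantale \<Rightarrow> 'a::complete_lattice \<Rightarrow> 'a) \<Rightarrow> ('q \<Rightarrow> 'b::complete_lattice \<Rightarrow> 'b)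
    \<Rightarrow> ('a \<Rightarrow> 'b) \<Rightarrow> bool" where
  "qmodule_hom actA actB h \<longleftrightarrow>
     (\<forall>X. h (Sup X) = Sup (h ` X)) \<and> (\<forall>a x. h (actA a x) = actB a (h x))"

definition prod_act ::
  "('q \<Rightarrow> 'm \<Rightarrow> 'm) \<Rightarrow> ('q \<Rightarrow> 'n \<Rightarrow> 'n) \<Rightarrow> 'q \<Rightarrow> 'm \<times> 'n \<Rightarrow> 'm \<times> 'n" where
  "prod_act actM actN a p = (actM a (fst p), actN a (snd p))"

definition qmodule_congruence ::
  "('q::quantale \<Rightarrow> 'k::complete_lattice \<Rightarrow> 'k) \<Rightarrow> ('k \<times> 'k) set \<Rightarrow> bool" where
  "qmodule_congruence act \<theta> \<longleftrightarrow>
     equiv UNIV \<theta> \<and>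
     (\<forall>a x y. (x, y) \<in> \<theta> \<longrightarrow> (act a x, act a y) \<in> \<theta>) \<and>
     (\<forall>S. S \<subseteq> \<theta> \<longrightarrow> (Sup (fst ` S), Sup (snd ` S)) \<in> \<theta>)"

definition congruence_generated ::
  "('q::quantale \<Rightarrow> 'k::complete_lattice \<Rightarrow> 'k) \<Rightarrow> ('k \<times> 'k) set \<Rightarrow> ('k \<times> 'k) set" where
  "congruence_generated act R = \<Inter>{\<theta>. qmodule_congruence act \<theta> \<and> R \<subseteq> \<theta>}"

definition saturated ::
  "('q \<Rightarrow> 'k::order \<Rightarrow> 'k) \<Rightarrow> ('k \<times> 'k) set \<Rightarrow> 'k \<Rightarrow> bool" where
  "saturated act R s \<longleftrightarrow> (\<forall>(x, y) \<in> R. \<forall>a. act a x \<le> s \<longleftrightarrow> act a y \<le> s)"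

end

theory Submission
  imports Defs
begin

text \<open>For a fixed element s of a module K, the relation identifying x and y when
all their translates a x, a y lie below s simultaneously is a congruence, and
s is R-saturated exactly when R is contained in it. Hence saturation with respect
to R and with respect to the congruence generated by R coincide. For the
generators ((f w, \<bottom>), (\<bottom>, g w)) the homomorphism property turns the translates
into (f (a w), \<bottom>) and (\<bottom>, g (a w)), so saturation of (u, v) says precisely that
f w \<le> u and g w \<le> v hold for the same w.\<close>

lemma qmodule_act_bot: "qmodule act \<Longrightarrow> act a bot = bot"
  unfolding qmodule_def by (metis Sup_empty image_empty)

lemma qmodule_prod_act:
  assumes "qmodule actM" and "qmodule actN"
  shows "qmodule (prod_act actM actN)"
  using assms unfolding qmodule_def prod_act_def Sup_prod_def
  by (simp add: image_image)

definition saturation_kernel ::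
  "('q \<Rightarrow> 'k::order \<Rightarrow> 'k) \<Rightarrow> 'k \<Rightarrow> ('k \<times> 'k) set" where
  "saturation_kernel act s = {(x, y). \<forall>a. act a x \<le> s \<longleftrightarrow> act a y \<le> s}"

lemma saturated_iff_subset_saturation_kernel:
  "saturated act R s \<longleftrightarrow> R \<subseteq> saturation_kernel act s"
  unfolding saturated_def saturation_kernel_def by auto

lemma qmodule_congruence_saturation_kernel:
  assumes act: "qmodule act"
  shows "qmodule_congruence act (saturation_kernel act s)"
  unfolding qmodule_congruence_def
proof (intro conjI allI impI)
  show "equiv UNIV (saturation_kernel act s)"
    unfolding saturation_kernel_def equiv_def refl_on_def sym_def trans_def by auto
next
  fix a x y
  assume "(x, y) \<in> saturation_kernel act s"
  then show "(act a x, act a y) \<in> saturation_kernel act s"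
    using act unfolding saturation_kernel_def qmodule_def by simp
next
  fix S
  assume S: "S \<subseteq> saturation_kernel act s"
  have below_Sup: "act a (Sup X) \<le> s \<longleftrightarrow> (\<forall>x\<in>X. act a x \<le> s)" for a X
    using act unfolding qmodule_def by (simp add: Sup_le_iff)
  have "act a (fst p) \<le> s \<longleftrightarrow> act a (snd p) \<le> s" if "p \<in> S" for a p
    using S that unfolding saturation_kernel_def by auto
  then show "(Sup (fst ` S), Sup (snd ` S)) \<in> saturation_kernel act s"
    unfolding saturation_kernel_def by (simp add: below_Sup)
qed

lemma saturated_congruence_generated_iff:
  assumes "qmodule act"
  shows "saturated act (congruence_generated act R) s \<longleftrightarrow> saturated act R s"
proof
  assume "saturated act (congruence_generated act R) s"
  moreover have "R \<subseteq> congruence_generated act R"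
    unfolding congruence_generated_def by blast
  ultimately show "saturated act R s"
    by (auto simp: saturated_iff_subset_saturation_kernel)
next
  assume "saturated act R s"
  then have "congruence_generated act R \<subseteq> saturation_kernel act s"
    using qmodule_congruence_saturation_kernel[OF assms]
    unfolding congruence_generated_def saturated_iff_subset_saturation_kernel by blast
  then show "saturated act (congruence_generated act R) s"
    by (simp add: saturated_iff_subset_saturation_kernel)
qed

lemma saturated_pushout_generators_iff:
  assumes M: "qmodule actM" and N: "qmodule actN"
    and f: "qmodule_hom actP actM f" and g: "qmodule_hom actP actN g"
  shows "saturated (prod_act actM actN) {((f w, bot), (bot, g w)) | w. True} (u, v)
           \<longleftrightarrow> {w. f w \<le> u} = {w. g w \<le> v}"
proof -
  have act_f: "prod_act actM actN a (f w, bot) = (f (actP a w), bot)" for a w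
    using f qmodule_act_bot[OF N] unfolding qmodule_hom_def prod_act_def by simp
  have act_g: "prod_act actM actN a (bot, g w) = (bot, g (actP a w))" for a w
    using g qmodule_act_bot[OF M] unfolding qmodule_hom_def prod_act_def by simp
  have f_one: "f (actP 1 w) = f w" and g_one: "g (actP 1 w) = g w" for w
    using f g M N unfolding qmodule_hom_def qmodule_def by simp_all
  have "saturated (prod_act actM actN) {((f w, bot), (bot, g w)) | w. True} (u, v)
          \<longleftrightarrow> (\<forall>w a. f (actP a w) \<le> u \<longleftrightarrow> g (actP a w) \<le> v)"
    unfolding saturated_def by (fastforce simp: act_f act_g)
  also have "\<dots> \<longleftrightarrow> (\<forall>w. f w \<le> u \<longleftrightarrow> g w \<le> v)"
    by (metis f_one g_one)
  finally show ?thesis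
    by blast
qed

theorem proposition4p4:
  fixes actM :: "'q::quantale \<Rightarrow> 'm::complete_lattice \<Rightarrow> 'm"
    and actN :: "'q \<Rightarrow> 'n::complete_lattice \<Rightarrow> 'n"
    and actP :: "'q \<Rightarrow> 'p::complete_lattice \<Rightarrow> 'p"
    and f :: "'p \<Rightarrow> 'm" and g :: "'p \<Rightarrow> 'n"
  assumes "qmodule actM" and "qmodule actN" and "qmodule actP"
    and "qmodule_hom actP actM f" and "qmodule_hom actP actN g"
    and "inj f" and "inj g"
  shows "\<forall>u v. saturated (prod_act actM actN)
                 (congruence_generated (prod_act actM actN)
                    {((f w, bot), (bot, g w)) | w. True}) (u, v)
             \<longleftrightarrow> {w. f w \<le> u} = {w. g w \<le> v}"
  using saturated_congruence_generated_iff[OF qmodule_prod_act[OF assms(1,2)]]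
    saturated_pushout_generators_iff[OF assms(1,2,4,5)]
  by blast

end
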